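(* There exists a constant $c_n>0$, depending only on $n$, such that for every open set $\Omega\subset\mathbb{R}^n$, every $(n-1)$-rectifiable set $M\subset\Omega$ with $\mathcal{H}^{n-1}(M)<\infty$, and every $\varepsilon>0$, $$\frac{1}{\mathcal{H}^{n(n-1)/2}(V_n)}\int_{V_n}d\nu\int_{\mathcal{Q}}dz\sum_{I\in\mathscr{E}_{\varepsilon,\nu,z}(\Omega)}\varepsilon^{n-1}\,\mathcal{H}^0(I\cap M)\le c_n\,\mathcal{H}^{n-1}(M).$$
   Context: $V_n$ is the set of orthonormal bases $\nu=(\nu_1,\dots,\nu_n)$ of $\mathbb{R}^n$, identified with $O(n)$ via the map $R_\nu$ sending the standard basis to $\nu$; it carries the measure $\mathcal{H}^{n(n-1)/2}$. $\mathcal{Q}:=(0,1)^n$. For $\varepsilon>0$, $\nu\in V_n$, $z\in\mathcal{Q}$ and open $\Omega$, define: - $\mathbb{Z}^n_{\varepsilon,\nu,z}(\Omega):=R_\nu(\varepsilon\mathbb{Z}^n+\varepsilon z)\cap\Omega$; - $\mathscr{C}_{\varepsilon,\nu,z}(\Omega):=\{j+R_\nu(\varepsilon\mathcal{Q}):j\in\mathbb{Z}^n_{\varepsilon,\nu,z}(\Omega),\ j+R_\nu(\varepsilon\mathcal{Q})\Subset\Omega\}$; - $\mathscr{E}_{\varepsilon,\nu,z}(\Omega)$ is the set of closed one-dimensional edges of cubes in $\mathscr{C}_{\varepsilon,\nu,z}(\Omega)$. $\mathcal{H}^0$ is the counting measure. *)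

theory Defs
  imports "HOL-Analysis.Analysis"
begin

definition hball_const :: "real \<Rightarrow> real" where
  "hball_const s = pi powr (s / 2) / Gamma (s / 2 + 1)"

definition hcost :: "real \<Rightarrow> 'a::metric_space set \<Rightarrow> real" where
  "hcost s S = (if S = {} then 0
                else if s = 0 then 1
                else hball_const s * (diameter S / 2) powr s)"

definition hausdorff_outer :: "real \<Rightarrow> 'a::metric_space set \<Rightarrow> ennreal" where
  "hausdorff_outer s A =
     (SUP \<delta>\<in>{0<..}. INF C \<in> {C :: nat \<Rightarrow> 'a set. A \<subseteq> (\<Union>i. C i) \<and>
                          (\<forall>i. bounded (C i) \<and> diameter (C i) \<le> \<delta>)}.
                  (\<Sum>i. ennreal (hcost s (C i))))"

definition hausdorff_measure :: "real \<Rightarrow> 'a::metric_space measure" where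
  "hausdorff_measure s = measure_of UNIV (sets borel) (hausdorff_outer s)"

text \<open>M is countably m-rectifiable: M is contained, up to an H^m-null set, in a
  countable union of Lipschitz images of R^m (here: of m-dimensional linear
  subspaces of the ambient space, which are isometric to R^m).\<close>
definition rectifiable :: "nat \<Rightarrow> 'a::euclidean_space set \<Rightarrow> bool" where
  "rectifiable m M \<longleftrightarrow>
     (\<exists>(M0::'a set) (T :: nat \<Rightarrow> 'a set) (f :: nat \<Rightarrow> 'a \<Rightarrow> 'a). hausdorff_outer (real m) M0 = 0 \<and>
        (\<forall>i. subspace (T i) \<and> dim (T i) = m \<and> (\<exists>L::real. L-lipschitz_on (T i) (f i))) \<and>
        M \<subseteq> M0 \<union> (\<Union>i. f i ` T i))"

definition unit_cube :: "(real^'n) set" where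
  "unit_cube = {x. \<forall>i. 0 < x $ i \<and> x $ i < 1}"

definition integer_vecs :: "(real^'n) set" where
  "integer_vecs = {k. \<forall>i. k $ i \<in> \<int>}"

text \<open>V_n identified with O(n); R sends the standard basis to the basis nu
  (the columns of R are nu_1 .. nu_n).\<close>
definition On :: "(real^'n^'n) set" where
  "On = {R. orthogonal_matrix R}"

definition lattice_pts :: "real \<Rightarrow> real^'n^'n \<Rightarrow> real^'n \<Rightarrow> (real^'n) set \<Rightarrow> (real^'n) set" where
  "lattice_pts \<epsilon> R z \<Omega> = {R *v (\<epsilon> *\<^sub>R (k + z)) | k. k \<in> integer_vecs} \<inter> \<Omega>"

definition compactly_contained :: "'a::topological_space set \<Rightarrow> 'a set \<Rightarrow> bool" where
  "compactly_contained A B \<longleftrightarrow> compact (closure A) \<and> closure A \<subseteq> B"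

definition cube :: "real \<Rightarrow> real^'n^'n \<Rightarrow> real^'n \<Rightarrow> (real^'n) set" where
  "cube \<epsilon> R j = (\<lambda>x. j + R *v x) ` ((\<lambda>x. \<epsilon> *\<^sub>R x) ` unit_cube)"

definition cube_corners :: "real \<Rightarrow> real^'n^'n \<Rightarrow> real^'n \<Rightarrow> (real^'n) set \<Rightarrow> (real^'n) set" where
  "cube_corners \<epsilon> R z \<Omega> = {j \<in> lattice_pts \<epsilon> R z \<Omega>. compactly_contained (cube \<epsilon> R j) \<Omega>}"

definition cube_edges_of :: "real \<Rightarrow> real^'n^'n \<Rightarrow> real^'n \<Rightarrow> (real^'n) set set" where
  "cube_edges_of \<epsilon> R j =
     {(\<lambda>x. j + R *v (\<epsilon> *\<^sub>R x)) ` closed_segment v (v + axis k 1) | v k.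
        (\<forall>i. v $ i = 0 \<or> v $ i = 1) \<and> v $ k = 0}"

definition edges :: "real \<Rightarrow> real^'n^'n \<Rightarrow> real^'n \<Rightarrow> (real^'n) set \<Rightarrow> (real^'n) set set" where
  "edges \<epsilon> R z \<Omega> = (\<Union>j \<in> cube_corners \<epsilon> R z \<Omega>. cube_edges_of \<epsilon> R j)"

end

theory Submission
  imports Defs
begin

(*
  Fix the rotation R. If an edge of direction k of the lattice R(eps (Z^n + z)) meets a set C
  of diameter d <= eps, then its anchor m + z lies in a box of volume at most 3 (2d/eps)^(n-1).
  Averaged over the offset z in (0,1)^n, the number of lattice points in a set is at most its
  volume, so any cover (C_i) of M by sets of diameter at most eps bounds the averaged number of
  incidences between edges and points of M, weighted by eps^(n-1), by a constant times
  sum_i diam(C_i)^(n-1). Any finite set of incidences is separated by covers that are fine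
  enough, so letting the mesh tend to zero and applying Fatou's lemma bounds the averaged count
  by c_n H^(n-1)(M) for every R; averaging over V_n preserves the bound.
*)

lemma borel_measurable_nn_integral_count_space:
  fixes f :: "'i \<Rightarrow> 'a \<Rightarrow> ennreal"
  assumes I: "countable I" and f: "\<And>i. i \<in> I \<Longrightarrow> f i \<in> borel_measurable M"
  shows "(\<lambda>x. \<integral>\<^sup>+i. f i x \<partial>count_space I) \<in> borel_measurable M"
proof (cases "finite I")
  case True
  then show ?thesis
    by (auto simp: nn_integral_count_space_finite intro!: borel_measurable_sum f)
next
  case False
  have bij: "bij_betw (from_nat_into I) UNIV I"
    by (rule bij_betw_from_nat_into[OF I False])
  then have "(\<lambda>x. \<integral>\<^sup>+i. f i x \<partial>count_space I) = (\<lambda>x. \<Sum>j. f (from_nat_into I j) x)"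
    by (simp add: nn_integral_bij_count_space[OF bij, symmetric] nn_integral_count_space_nat)
  moreover have "from_nat_into I j \<in> I" for j
    using bij by (auto simp: bij_betw_def)
  ultimately show ?thesis
    using f by (simp add: borel_measurable_suminf_order)
qed

lemma sum_le_nn_integral_count_space:
  fixes f :: "'a \<Rightarrow> ennreal"
  assumes "finite J" "J \<subseteq> A"
  shows "(\<Sum>x\<in>J. f x) \<le> (\<integral>\<^sup>+x. f x \<partial>count_space A)"
proof -
  have "(\<Sum>x\<in>J. f x) = (\<integral>\<^sup>+x. f x * indicator J x \<partial>count_space A)"
    using assms by (subst nn_integral_count_space'[of J]) auto
  also have "\<dots> \<le> (\<integral>\<^sup>+x. f x \<partial>count_space A)"
    by (intro nn_integral_mono) (auto simp: indicator_def)
  finally show ?thesis .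
qed

lemma card_le_suminf_sum_nn_integral_count_space:
  fixes a :: "nat \<Rightarrow> 'k::finite \<Rightarrow> 'a \<Rightarrow> ennreal"
  assumes G: "finite G" "G \<subseteq> UNIV \<times> UNIV \<times> A" and a: "\<And>i k m. (i, k, m) \<in> G \<Longrightarrow> 1 \<le> a i k m"
  shows "of_nat (card G) \<le> (\<Sum>i. \<Sum>k\<in>UNIV. \<integral>\<^sup>+m. a i k m \<partial>count_space A)"
proof -
  obtain N where N: "fst ` G \<subseteq> {..<N}"
    using finite_nat_bounded G(1) by blast
  define J where "J = snd ` snd ` G"
  have J: "finite J" "J \<subseteq> A"
    using G by (auto simp: J_def)
  have G_sub: "G \<subseteq> {..<N} \<times> UNIV \<times> J"
  proof safe
    fix i k m assume g: "(i, k, m) \<in> G"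
    show "i < N"
      using N g by force
    show "m \<in> J"
      using g unfolding J_def by force
  qed simp
  have "of_nat (card G) = (\<Sum>(i, k, m)\<in>G. 1 :: ennreal)"
    by simp
  also have "\<dots> \<le> (\<Sum>(i, k, m)\<in>G. a i k m)"
    by (intro sum_mono) (auto simp: a)
  also have "\<dots> \<le> (\<Sum>(i, k, m)\<in>{..<N} \<times> UNIV \<times> J. a i k m)"
    using J(1) G_sub by (intro sum_mono2) auto
  also have "\<dots> = (\<Sum>i<N. \<Sum>k\<in>UNIV. \<Sum>m\<in>J. a i k m)"
    by (simp add: sum.cartesian_product)
  also have "\<dots> \<le> (\<Sum>i<N. \<Sum>k\<in>UNIV. \<integral>\<^sup>+m. a i k m \<partial>count_space A)"
    by (intro sum_mono sum_le_nn_integral_count_space J)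
  also have "\<dots> \<le> (\<Sum>i. \<Sum>k\<in>UNIV. \<integral>\<^sup>+m. a i k m \<partial>count_space A)"
    by (intro sum_le_suminf) auto
  finally show ?thesis .
qed

lemma emeasure_count_space_le:
  assumes "\<And>F. finite F \<Longrightarrow> F \<subseteq> A \<Longrightarrow> of_nat (card F) \<le> X"
  shows "emeasure (count_space UNIV) A \<le> X"
proof (cases "finite A")
  case True
  then show ?thesis
    using assms by simp
next
  case False
  have "X = top"
  proof (rule ccontr)
    assume "X \<noteq> top"
    then obtain n where "X < of_nat n"
      using ennreal_Ex_less_of_nat top.not_eq_extremum by blast
    moreover obtain F where "F \<subseteq> A" "finite F" "card F = n"
      using infinite_arbitrarily_large[OF False] by blast
    ultimately show False
      using assms by (metis leD)
  qed
  then show ?thesis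
    by simp
qed

lemma nn_integral_count_space_emeasure_Sigma:
  assumes "countable E"
  shows "(\<integral>\<^sup>+I. emeasure (count_space UNIV) (f I) \<partial>count_space E) = emeasure (count_space UNIV) (SIGMA I:E. f I)"
proof -
  have "emeasure (count_space UNIV) ({I} \<times> f I) = emeasure (count_space UNIV) (f I)" for I
    by (simp add: emeasure_count_space finite_cartesian_product_iff card_cartesian_product_singleton)
  moreover have "(SIGMA I:E. f I) = (\<Union>I\<in>E. {I} \<times> f I)"
    by auto
  ultimately show ?thesis
    using assms by (simp, subst emeasure_UN_countable) (auto simp: disjoint_family_on_def)
qed

lemma liminf_ennreal_cmult:
  fixes c :: ennreal
  assumes "c < top"
  shows "liminf (\<lambda>k. c * g k) = c * liminf g"
  using Liminf_compose_continuous_mono[of "\<lambda>x. c * x" sequentially g]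
    ennreal_continuous_on_cmult[OF assms continuous_on_id]
  by (simp add: mono_def mult_left_mono)

lemma liminf_le_of_le_add_inverse:
  fixes a :: "nat \<Rightarrow> ennreal"
  assumes le: "\<And>k. a k \<le> b + ennreal (K / real (Suc k))"
  shows "liminf a \<le> b"
proof (rule ennreal_le_epsilon)
  fix r :: real assume "0 < r"
  have "(\<lambda>k. K * inverse (real (Suc k))) \<longlonglongrightarrow> 0"
    by (rule tendsto_mult_right_zero[OF LIMSEQ_inverse_real_of_nat])
  with \<open>0 < r\<close> have "eventually (\<lambda>k. K / real (Suc k) < r) sequentially"
    by (simp add: order_tendsto_iff divide_inverse)
  then have "eventually (\<lambda>k. a k \<le> b + ennreal r) sequentially"
    by eventually_elim (metis le add_left_mono ennreal_leI less_imp_le order_trans)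
  then show "liminf a \<le> b + ennreal r"
    by (rule Liminf_le[rotated]) simp
qed

lemma set_nn_integral_divide_emeasure_le:
  fixes f :: "'a \<Rightarrow> ennreal"
  assumes A: "A \<in> sets \<mu>" and le: "\<And>x. x \<in> A \<Longrightarrow> f x \<le> B"
  shows "(\<integral>\<^sup>+x\<in>A. f x \<partial>\<mu>) / emeasure \<mu> A \<le> B"
proof -
  have I: "(\<integral>\<^sup>+x\<in>A. f x \<partial>\<mu>) \<le> B * emeasure \<mu> A"
    using le by (subst nn_integral_cmult_indicator[OF A, symmetric]) (auto intro!: nn_integral_mono split: split_indicator)
  consider "emeasure \<mu> A = 0" | "emeasure \<mu> A = top" | "emeasure \<mu> A \<noteq> 0" "emeasure \<mu> A \<noteq> top"
    by blast
  then show ?thesis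
  proof cases
    case 3
    have "(\<integral>\<^sup>+x\<in>A. f x \<partial>\<mu>) / emeasure \<mu> A \<le> B * emeasure \<mu> A / emeasure \<mu> A"
      by (rule divide_right_mono_ennreal[OF I])
    also have "\<dots> = B"
      using 3 by (rule ennreal_mult_divide_eq)
    finally show ?thesis .
  qed (use I in simp_all)
qed

lemma borel_measurable_indicator_translate:
  fixes c :: "'a::euclidean_space"
  assumes "B \<in> sets borel"
  shows "(\<lambda>z. indicator B (c + z) :: ennreal) \<in> borel_measurable borel"
proof -
  have "(\<lambda>z. c + z) \<in> borel_measurable borel"
    by (intro borel_measurable_continuous_onI continuous_intros)
  from measurable_compose[OF this borel_measurable_indicator[OF assms]] show ?thesis
    by (simp add: o_def)
qed

lemma nn_integral_translate_lborel:
  fixes g :: "real^'n \<Rightarrow> ennreal"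
  assumes [measurable]: "g \<in> borel_measurable borel"
  shows "(\<integral>\<^sup>+z. g (c + z) \<partial>lborel) = (\<integral>\<^sup>+w. g w \<partial>lborel)"
proof -
  have "(\<integral>\<^sup>+w. g w \<partial>lborel) = (\<integral>\<^sup>+w. g w \<partial>distr lborel borel ((+) c))"
    by (simp add: lborel_distr_plus)
  also have "\<dots> = (\<integral>\<^sup>+z. g (c + z) \<partial>lborel)"
    by (rule nn_integral_distr) auto
  finally show ?thesis ..
qed

lemma prod_UNIV_if_eq:
  "(\<Prod>i\<in>(UNIV::'n::finite set). if i = k then a else b) = a * b ^ (CARD('n) - 1)"
proof -
  have "(\<Prod>i\<in>UNIV. if i = k then a else b) = a * (\<Prod>i\<in>UNIV - {k}. if i = k then a else b)"
    by (subst prod.remove[of UNIV k]) auto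
  also have "(\<Prod>i\<in>UNIV - {k}. if i = k then a else b) = (\<Prod>i\<in>UNIV - {k}. b)"
    by (intro prod.cong) auto
  finally show ?thesis
    by (simp add: card_Diff_singleton)
qed

lemma orthogonal_matrix_norm_mult:
  "orthogonal_matrix (Q :: real^'n^'n) \<Longrightarrow> norm (Q *v x) = norm x"
  using orthogonal_transformation_matrix[of "\<lambda>x. Q *v x"] orthogonal_transformation_norm
  by auto

lemma orthogonal_matrix_transpose_mult_component_diff:
  assumes "orthogonal_matrix (R :: real^'n^'n)"
  shows "\<bar>(transpose R *v x) $ i - (transpose R *v y) $ i\<bar> \<le> dist x y"
proof -
  have "\<bar>(transpose R *v x) $ i - (transpose R *v y) $ i\<bar> = \<bar>(transpose R *v (x - y)) $ i\<bar>"
    by (simp add: matrix_vector_mult_diff_distrib)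
  also have "\<dots> \<le> norm (transpose R *v (x - y))"
    by (rule component_le_norm_cart)
  also have "\<dots> = dist x y"
    using orthogonal_matrix_norm_mult[of "transpose R" "x - y"] assms
    by (simp only: orthogonal_matrix_transpose dist_norm)
  finally show ?thesis .
qed

section \<open>Lattice points\<close>

lemma integer_vecs_countable: "countable (integer_vecs :: (real^'n) set)"
proof -
  have "integer_vecs \<subseteq> range (\<lambda>f::'n \<Rightarrow> int. \<chi> i. real_of_int (f i))"
  proof
    fix k :: "real^'n" assume "k \<in> integer_vecs"
    then have "\<forall>i. \<exists>m::int. k $ i = of_int m" unfolding integer_vecs_def by (auto elim!: Ints_cases)
    then obtain f where "\<forall>i. k $ i = of_int (f i)" by metis
    then show "k \<in> range (\<lambda>f::'n \<Rightarrow> int. \<chi> i. real_of_int (f i))"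
      by (intro image_eqI[of _ _ f]) (auto simp: vec_eq_iff)
  qed
  then show ?thesis by (rule countable_subset) simp
qed

lemma integer_vecs_add: "a \<in> integer_vecs \<Longrightarrow> b \<in> integer_vecs \<Longrightarrow> a + b \<in> integer_vecs"
  by (auto simp: integer_vecs_def)

lemma unit_cube_eq_box: "(unit_cube :: (real^'n) set) = box 0 1"
  by (auto simp: unit_cube_def mem_box_cart)

lemma unit_cube_borel[measurable]: "(unit_cube :: (real^'n) set) \<in> sets borel"
  by (simp add: unit_cube_eq_box)

lemma disjoint_family_on_unit_cube_translates:
  "disjoint_family_on (\<lambda>m. {w::real^'n. w - m \<in> unit_cube}) integer_vecs"
proof (unfold disjoint_family_on_def, intro ballI impI)
  fix m m' :: "real^'n" assume "m \<in> integer_vecs" "m' \<in> integer_vecs" "m \<noteq> m'"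
  then obtain c where c: "m $ c \<noteq> m' $ c" and int: "m $ c - m' $ c \<in> \<int>"
    by (auto simp: vec_eq_iff integer_vecs_def)
  show "{w. w - m \<in> unit_cube} \<inter> {w. w - m' \<in> unit_cube} = {}"
  proof (rule ccontr)
    assume "\<not> ?thesis"
    then obtain w :: "real^'n" where "w - m \<in> unit_cube" "w - m' \<in> unit_cube" by blast
    then have "0 < w $ c - m $ c" "w $ c - m $ c < 1" "0 < w $ c - m' $ c" "w $ c - m' $ c < 1"
      unfolding unit_cube_def by auto
    then have "\<bar>m $ c - m' $ c\<bar> < 1"
      by (simp add: abs_less_iff)
    with int c show False
      using Ints_nonzero_abs_less1 by force
  qed
qed

definition lattice_count :: "(real^'n) set \<Rightarrow> real^'n \<Rightarrow> ennreal" where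
  "lattice_count B z = (\<integral>\<^sup>+m. indicator B (m + z) \<partial>count_space integer_vecs)"

lemma borel_measurable_lattice_count[measurable]:
  "B \<in> sets borel \<Longrightarrow> lattice_count B \<in> borel_measurable borel"
  unfolding lattice_count_def
  by (intro borel_measurable_nn_integral_count_space integer_vecs_countable
      borel_measurable_indicator_translate)

lemma nn_integral_lattice_count_le_emeasure:
  assumes [measurable]: "B \<in> sets borel"
  shows "(\<integral>\<^sup>+z\<in>unit_cube. lattice_count B z \<partial>lborel) \<le> emeasure lborel (B :: (real^'n) set)"
proof -
  define T where "T m = B \<inter> {w. w - m \<in> unit_cube}" for m :: "real^'n"
  have T_borel: "T m \<in> sets borel" for m
  proof -
    have "(\<lambda>w. w - m) \<in> borel_measurable borel"
      by (intro borel_measurable_continuous_onI continuous_intros)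
    then have "(\<lambda>w. w - m) -` unit_cube \<in> sets borel"
      by (rule measurable_sets_borel) simp
    then show ?thesis
      unfolding T_def vimage_def using assms by blast
  qed
  have "(\<integral>\<^sup>+z\<in>unit_cube. lattice_count B z \<partial>lborel) =
        (\<integral>\<^sup>+z. \<integral>\<^sup>+m. indicator (T m) (m + z) \<partial>count_space integer_vecs \<partial>lborel)"
    unfolding lattice_count_def
    by (intro nn_integral_cong) (auto simp: T_def nn_integral_multc[symmetric] indicator_def)
  also have "\<dots> = (\<integral>\<^sup>+m. \<integral>\<^sup>+z. indicator (T m) (m + z) \<partial>lborel \<partial>count_space integer_vecs)"
    using T_borel
    by (intro nn_integral_count_space_nn_integral integer_vecs_countable)
       (simp add: borel_measurable_indicator_translate)
  also have "\<dots> = (\<integral>\<^sup>+m. emeasure lborel (T m) \<partial>count_space integer_vecs)"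
    using T_borel by (intro nn_integral_cong) (simp add: nn_integral_translate_lborel)
  also have "\<dots> = emeasure lborel (\<Union>m\<in>integer_vecs. T m)"
    using disjoint_family_on_unit_cube_translates
    by (intro emeasure_UN_countable[symmetric] integer_vecs_countable)
       (auto simp: T_def disjoint_family_on_def)
  also have "\<dots> \<le> emeasure lborel B"
    by (intro emeasure_mono) (auto simp: T_def)
  finally show ?thesis .
qed

section \<open>Edges and their anchor boxes\<close>

definition lattice_edge :: "real \<Rightarrow> real^'n^'n \<Rightarrow> real^'n \<Rightarrow> real^'n \<Rightarrow> 'n \<Rightarrow> (real^'n) set" where
  "lattice_edge \<epsilon> R z m k = {R *v (\<epsilon> *\<^sub>R (m + z + t *\<^sub>R axis k 1)) | t. 0 \<le> t \<and> t \<le> 1}"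

lemma edges_imp_lattice_edge:
  assumes "I \<in> edges \<epsilon> R z \<Omega>"
  obtains m k where "m \<in> integer_vecs" "I = lattice_edge \<epsilon> R z m k"
proof -
  from assms obtain j where j: "j \<in> cube_corners \<epsilon> R z \<Omega>" and I: "I \<in> cube_edges_of \<epsilon> R j"
    unfolding edges_def by blast
  from j obtain m0 where m0: "m0 \<in> integer_vecs" and j_eq: "j = R *v (\<epsilon> *\<^sub>R (m0 + z))"
    unfolding cube_corners_def lattice_pts_def by blast
  from I obtain v k where v: "\<forall>i. v $ i = 0 \<or> v $ i = 1"
    and I_eq: "I = (\<lambda>x. j + R *v (\<epsilon> *\<^sub>R x)) ` closed_segment v (v + axis k 1)"
    unfolding cube_edges_of_def by blast
  have "v $ i \<in> \<int>" for i
    using v[rule_format, of i] by auto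
  then have v_int: "v \<in> integer_vecs"
    by (simp add: integer_vecs_def)
  have seg: "closed_segment v (v + axis k 1) = (\<lambda>t. (1 - t) *\<^sub>R v + t *\<^sub>R (v + axis k 1)) ` {0..1}"
    by (auto simp: closed_segment_def)
  have "j + R *v (\<epsilon> *\<^sub>R ((1 - t) *\<^sub>R v + t *\<^sub>R (v + axis k 1))) =
        R *v (\<epsilon> *\<^sub>R (m0 + v + z + t *\<^sub>R axis k 1))" for t
  proof -
    have "\<epsilon> *\<^sub>R (m0 + v + z + t *\<^sub>R axis k 1) =
          \<epsilon> *\<^sub>R (m0 + z) + \<epsilon> *\<^sub>R ((1 - t) *\<^sub>R v + t *\<^sub>R (v + axis k 1))"
      by (simp add: algebra_simps)
    then show ?thesis
      unfolding j_eq by (simp only: matrix_vector_right_distrib)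
  qed
  then have "I = (\<lambda>t. R *v (\<epsilon> *\<^sub>R (m0 + v + z + t *\<^sub>R axis k 1))) ` {0..1}"
    unfolding I_eq seg image_image by simp
  then have "I = lattice_edge \<epsilon> R z (m0 + v) k"
    unfolding lattice_edge_def by auto
  with that m0 v_int integer_vecs_add show ?thesis by blast
qed

lemma countable_edges: "countable (edges \<epsilon> R z \<Omega> :: (real^'n) set set)"
proof -
  have "edges \<epsilon> R z \<Omega> \<subseteq> (\<lambda>(m, k). lattice_edge \<epsilon> R z m (k::'n)) ` (integer_vecs \<times> UNIV)"
    by (auto elim!: edges_imp_lattice_edge)
  then show ?thesis
    by (rule countable_subset) (simp add: integer_vecs_countable)
qed

text \<open>In the coordinates of the lattice \<open>\<int>\<^sup>n + z\<close>, a box containing the anchors \<open>m + z\<close> of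
  all edges of direction \<open>k\<close> that meet \<open>C\<close>.\<close>
definition edge_box :: "real \<Rightarrow> real^'n^'n \<Rightarrow> (real^'n) set \<Rightarrow> 'n \<Rightarrow> (real^'n) set" where
  "edge_box \<epsilon> R C k = (if C = {} then {} else
     cbox (\<chi> i. (transpose R *v (SOME x. x \<in> C)) $ i / \<epsilon> - diameter C / \<epsilon> - (if i = k then 1 else 0))
          (\<chi> i. (transpose R *v (SOME x. x \<in> C)) $ i / \<epsilon> + diameter C / \<epsilon>))"

lemma edge_box_borel[measurable]: "edge_box \<epsilon> R C k \<in> sets borel"
  unfolding edge_box_def by auto

lemma lattice_edge_anchor_mem_edge_box:
  assumes R: "orthogonal_matrix R" and \<epsilon>: "\<epsilon> > 0" and C: "bounded C" "x \<in> C"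
    and x: "x \<in> lattice_edge \<epsilon> R z m k"
  shows "m + z \<in> edge_box \<epsilon> R C k"
proof -
  obtain t where t: "0 \<le> t" "t \<le> 1" and x_eq: "x = R *v (\<epsilon> *\<^sub>R (m + z + t *\<^sub>R axis k 1))"
    using x unfolding lattice_edge_def by blast
  define c where "c = (SOME x. x \<in> C)"
  have c: "c \<in> C"
    unfolding c_def using C by (metis someI_ex)
  have "transpose R ** R = mat 1"
    using R by (simp add: orthogonal_matrix)
  then have Rx: "(transpose R *v x) $ i = \<epsilon> * ((m + z) $ i + (if i = k then t else 0))" for i
    unfolding x_eq matrix_vector_mul_assoc by (simp add: axis_def)
  have "\<bar>\<epsilon> * ((m + z) $ i + (if i = k then t else 0)) - (transpose R *v c) $ i\<bar> \<le> diameter C" for i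
    using orthogonal_matrix_transpose_mult_component_diff[OF R, of x i c] Rx[of i]
      diameter_bounded_bound[OF C c] by simp
  then have near: "\<bar>(m + z) $ i + (if i = k then t else 0) - (transpose R *v c) $ i / \<epsilon>\<bar> \<le> diameter C / \<epsilon>" for i
    using \<epsilon> by (simp add: field_simps abs_divide[symmetric] divide_right_mono)
  have "(transpose R *v c) $ i / \<epsilon> - diameter C / \<epsilon> - (if i = k then 1 else 0) \<le> (m + z) $ i \<and>
        (m + z) $ i \<le> (transpose R *v c) $ i / \<epsilon> + diameter C / \<epsilon>" for i
    using near[of i] t by (cases "i = k") (auto simp: abs_le_iff simp del: vector_add_component)
  then show ?thesis
    using C unfolding edge_box_def c_def[symmetric]
    by (auto simp: mem_box_cart simp del: vector_add_component)
qed

lemma hball_const_pos: "s \<ge> 0 \<Longrightarrow> hball_const s > 0"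
  unfolding hball_const_def by (intro divide_pos_pos Gamma_real_pos) auto

lemma hcost_nonneg: "s \<ge> 0 \<Longrightarrow> hcost s C \<ge> 0"
  unfolding hcost_def using hball_const_pos[of s] by auto

lemma hcost_of_nat:
  assumes "C \<noteq> {}" "bounded C"
  shows "hcost (real N) C = hball_const (real N) * (diameter C / 2) ^ N"
  using assms diameter_ge_0[OF assms(2)]
  by (cases "N = 0") (auto simp: hcost_def hball_const_def powr_realpow')

lemma emeasure_edge_box:
  fixes k :: "'n::finite"
  assumes \<epsilon>: "\<epsilon> > 0" and C: "C \<noteq> {}" "bounded C"
  defines "r \<equiv> diameter C / \<epsilon>"
  shows "emeasure lborel (edge_box \<epsilon> R C k) = ennreal ((2 * r + 1) * (2 * r) ^ (CARD('n) - 1))"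
proof -
  define y where "y = transpose R *v (SOME x. x \<in> C)"
  define lo :: "real^'n" where "lo = (\<chi> i. y $ i / \<epsilon> - r - (if i = k then 1 else 0))"
  define hi :: "real^'n" where "hi = (\<chi> i. y $ i / \<epsilon> + r)"
  have r: "r \<ge> 0"
    unfolding r_def using \<epsilon> diameter_ge_0[OF C(2)] by simp
  have box: "edge_box \<epsilon> R C k = cbox lo hi"
    unfolding edge_box_def lo_def hi_def y_def r_def using C by simp
  have "cbox lo hi \<noteq> {}"
    using r by (auto simp: box_ne_empty lo_def hi_def inner_axis cart_eq_inner_axis[symmetric] Basis_vec_def)
  then have "measure lborel (cbox lo hi) = (\<Prod>i\<in>UNIV. hi $ i - lo $ i)"
    by (rule content_cbox_cart)
  also have "\<dots> = (\<Prod>i\<in>UNIV. if i = k then 2 * r + 1 else 2 * r)"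
    by (intro prod.cong) (auto simp: lo_def hi_def)
  moreover have "emeasure lborel (cbox lo hi) = ennreal (measure lborel (cbox lo hi))"
    using emeasure_lborel_cbox_finite[of lo hi] by (intro emeasure_eq_ennreal_measure) auto
  ultimately show ?thesis
    unfolding box prod_UNIV_if_eq by simp
qed

definition edge_box_const :: "nat \<Rightarrow> real" where
  "edge_box_const n = 3 * 4 ^ (n - 1) / hball_const (real (n - 1))"

lemma edge_box_const_pos: "edge_box_const n > 0"
  unfolding edge_box_const_def using hball_const_pos[of "real (n - 1)"] by simp

lemma emeasure_edge_box_le:
  fixes k :: "'n::finite"
  assumes \<epsilon>: "\<epsilon> > 0" and C: "bounded C" "diameter C \<le> \<epsilon>"
  shows "ennreal (\<epsilon> ^ (CARD('n) - 1)) * emeasure lborel (edge_box \<epsilon> R C k)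
           \<le> ennreal (edge_box_const CARD('n) * hcost (real (CARD('n) - 1)) C)"
proof (cases "C = {}")
  case True
  then show ?thesis by (simp add: edge_box_def)
next
  case False
  define N where "N = CARD('n) - 1"
  define d where "d = diameter C"
  have d: "0 \<le> d" "d \<le> \<epsilon>"
    using C diameter_ge_0[OF C(1)] by (auto simp: d_def)
  have "\<epsilon> ^ N * ((2 * (d / \<epsilon>) + 1) * (2 * (d / \<epsilon>)) ^ N) \<le> \<epsilon> ^ N * (3 * (2 * (d / \<epsilon>)) ^ N)"
  proof -
    have "d / \<epsilon> \<le> 1"
      using \<epsilon> d by simp
    then have "2 * (d / \<epsilon>) + 1 \<le> 3"
      by linarith
    then show ?thesis
      using \<epsilon> d by (intro mult_left_mono mult_right_mono) auto
  qed
  also have "\<dots> = 3 * (2 * d) ^ N"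
    using \<epsilon> by (simp add: power_divide)
  also have "\<dots> = 3 * 4 ^ N * (d / 2) ^ N"
    by (simp only: mult.assoc power_mult_distrib[symmetric]) simp
  also have "\<dots> = edge_box_const CARD('n) * hcost (real N) C"
    using hcost_of_nat[OF False C(1), of N] hball_const_pos[of "real N"]
    by (simp add: edge_box_const_def N_def d_def)
  finally show ?thesis
    using \<epsilon> d False C(1)
    by (auto simp: emeasure_edge_box N_def d_def ennreal_mult[symmetric] intro!: ennreal_leI)
qed

section \<open>Counting edge incidences through Hausdorff covers\<close>

definition cover_count :: "real \<Rightarrow> real^'n^'n \<Rightarrow> (nat \<Rightarrow> (real^'n) set) \<Rightarrow> real^'n \<Rightarrow> ennreal" where
  "cover_count \<epsilon> R Cs z = (\<Sum>i. \<Sum>k\<in>UNIV. lattice_count (edge_box \<epsilon> R (Cs i) k) z)"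

lemma borel_measurable_cover_count[measurable]: "cover_count \<epsilon> R Cs \<in> borel_measurable borel"
  unfolding cover_count_def
  by (intro borel_measurable_suminf_order borel_measurable_sum borel_measurable_lattice_count edge_box_borel)

lemma nn_integral_cover_count_le:
  fixes Cs :: "nat \<Rightarrow> (real^'n) set"
  assumes \<epsilon>: "\<epsilon> > 0" and Cs: "\<And>i. bounded (Cs i)" "\<And>i. diameter (Cs i) \<le> \<epsilon>"
  shows "ennreal (\<epsilon> ^ (CARD('n) - 1)) * (\<integral>\<^sup>+z\<in>unit_cube. cover_count \<epsilon> R Cs z \<partial>lborel)
     \<le> ennreal (real CARD('n) * edge_box_const CARD('n)) * (\<Sum>i. ennreal (hcost (real (CARD('n) - 1)) (Cs i)))"
proof -
  let ?E = "ennreal (\<epsilon> ^ (CARD('n) - 1))"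
  let ?K = "edge_box_const CARD('n)"
  let ?h = "\<lambda>i. hcost (real (CARD('n) - 1)) (Cs i)"
  have "(\<integral>\<^sup>+z\<in>unit_cube. cover_count \<epsilon> R Cs z \<partial>lborel) =
        (\<integral>\<^sup>+z. (\<Sum>i. \<Sum>k\<in>UNIV. lattice_count (edge_box \<epsilon> R (Cs i) k) z * indicator unit_cube z) \<partial>lborel)"
    by (intro nn_integral_cong) (simp add: cover_count_def sum_distrib_right)
  also have "\<dots> = (\<Sum>i. \<integral>\<^sup>+z. (\<Sum>k\<in>UNIV. lattice_count (edge_box \<epsilon> R (Cs i) k) z * indicator unit_cube z) \<partial>lborel)"
    by (rule nn_integral_suminf) measurable
  also have "\<dots> = (\<Sum>i. \<Sum>k\<in>UNIV. \<integral>\<^sup>+z\<in>unit_cube. lattice_count (edge_box \<epsilon> R (Cs i) k) z \<partial>lborel)"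
    by (intro suminf_cong nn_integral_sum) measurable
  also have "\<dots> \<le> (\<Sum>i. \<Sum>k\<in>UNIV. emeasure lborel (edge_box \<epsilon> R (Cs i) k))"
    by (intro suminf_le sum_mono nn_integral_lattice_count_le_emeasure edge_box_borel) auto
  finally have "?E * (\<integral>\<^sup>+z\<in>unit_cube. cover_count \<epsilon> R Cs z \<partial>lborel) \<le>
      ?E * (\<Sum>i. \<Sum>k\<in>UNIV. emeasure lborel (edge_box \<epsilon> R (Cs i) k))"
    by (rule mult_left_mono) simp
  also have "\<dots> = (\<Sum>i. \<Sum>k\<in>UNIV. ?E * emeasure lborel (edge_box \<epsilon> R (Cs i) k))"
    by (subst ennreal_suminf_cmult[symmetric]) (simp add: sum_distrib_left)
  also have "\<dots> \<le> (\<Sum>i. \<Sum>k\<in>(UNIV::'n set). ennreal (?K * ?h i))"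
    using \<epsilon> Cs by (intro suminf_le sum_mono emeasure_edge_box_le) auto
  also have "\<dots> = (\<Sum>i. ennreal (real CARD('n) * ?K) * ennreal (?h i))"
  proof (rule suminf_cong)
    fix i
    have "0 \<le> ?K" "0 \<le> ?h i"
      using edge_box_const_pos[of "CARD('n)"] hcost_nonneg[of "real (CARD('n) - 1)"] by auto
    then show "(\<Sum>k\<in>(UNIV::'n set). ennreal (?K * ?h i)) = ennreal (real CARD('n) * ?K) * ennreal (?h i)"
      by (simp add: ennreal_mult[symmetric] ennreal_of_nat_eq_real_of_nat mult.assoc)
  qed
  finally show ?thesis
    by simp
qed

definition edge_incidences ::
    "real \<Rightarrow> real^'n^'n \<Rightarrow> real^'n \<Rightarrow> (real^'n) set \<Rightarrow> (real^'n) set \<Rightarrow> ((real^'n) set \<times> (real^'n)) set" where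
  "edge_incidences \<epsilon> R z \<Omega> M = (SIGMA I:edges \<epsilon> R z \<Omega>. I \<inter> M)"

text \<open>The direction and anchor of an edge determine it, and a cover set finer than the separation
  of the incidence points contains at most one of them; so recording for each incidence \<open>(I, x)\<close>
  a cover set containing \<open>x\<close> together with the direction and anchor of \<open>I\<close> is injective.\<close>
lemma card_le_cover_count:
  fixes M :: "(real^'n) set"
  assumes R: "orthogonal_matrix R" and \<epsilon>: "\<epsilon> > 0"
    and F: "finite F" "F \<subseteq> edge_incidences \<epsilon> R z \<Omega> M"
    and sep: "\<And>x y. x \<in> snd ` F \<Longrightarrow> y \<in> snd ` F \<Longrightarrow> dist x y < d \<Longrightarrow> x = y"
    and cov: "M \<subseteq> (\<Union>i. Cs i)" and bdd: "\<And>i. bounded (Cs i)" and diam: "\<And>i. diameter (Cs i) < d"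
  shows "of_nat (card F) \<le> cover_count \<epsilon> R Cs z"
proof -
  have "\<forall>I\<in>edges \<epsilon> R z \<Omega>. \<exists>p. fst p \<in> integer_vecs \<and> I = lattice_edge \<epsilon> R z (fst p) (snd p)"
    by (metis edges_imp_lattice_edge fst_conv snd_conv)
  then obtain p where p: "\<And>I. I \<in> edges \<epsilon> R z \<Omega> \<Longrightarrow>
      fst (p I) \<in> integer_vecs \<and> I = lattice_edge \<epsilon> R z (fst (p I)) (snd (p I))"
    by metis
  obtain ix where ix: "\<And>x. x \<in> M \<Longrightarrow> x \<in> Cs (ix x)"
    using cov by (metis UN_E subsetD)
  define f where "f = (\<lambda>(I, x). (ix x, snd (p I), fst (p I)))"
  have inc: "I \<in> edges \<epsilon> R z \<Omega>" "x \<in> I" "x \<in> M" if "(I, x) \<in> F" for I x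
    using F(2) that by (auto simp: edge_incidences_def)
  have "inj_on f F"
  proof (rule inj_onI, clarify)
    fix I x I' x' assume a: "(I, x) \<in> F" and b: "(I', x') \<in> F" and eq: "f (I, x) = f (I', x')"
    then have "p I = p I'" "ix x = ix x'"
      by (auto simp: f_def prod_eq_iff)
    then have "x \<in> Cs (ix x)" "x' \<in> Cs (ix x)" and "I = I'"
      using ix[OF inc(3)[OF a]] ix[OF inc(3)[OF b]] p[OF inc(1)[OF a]] p[OF inc(1)[OF b]] by auto
    moreover from this have "dist x x' < d"
      using diameter_bounded_bound[OF bdd] diam[of "ix x"] by (meson le_less_trans)
    ultimately show "I = I' \<and> x = x'"
      using sep a b by force
  qed
  then have "of_nat (card F) = (of_nat (card (f ` F)) :: ennreal)"
    by (simp add: card_image)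
  also have "\<dots> \<le> (\<Sum>i. \<Sum>k\<in>UNIV. \<integral>\<^sup>+m. indicator (edge_box \<epsilon> R (Cs i) k) (m + z) \<partial>count_space integer_vecs)"
  proof (rule card_le_suminf_sum_nn_integral_count_space)
    show "finite (f ` F)"
      using F(1) by simp
    show "f ` F \<subseteq> UNIV \<times> UNIV \<times> integer_vecs"
      using p inc by (auto simp: f_def)
    fix i k m assume "(i, k, m) \<in> f ` F"
    then obtain I x where Ix: "(I, x) \<in> F" and "i = ix x" "k = snd (p I)" "m = fst (p I)"
      by (auto simp: f_def)
    then have "x \<in> Cs i" "x \<in> lattice_edge \<epsilon> R z m k"
      using ix[OF inc(3)[OF Ix]] p[OF inc(1)[OF Ix]] inc(2)[OF Ix] by auto
    then have "m + z \<in> edge_box \<epsilon> R (Cs i) k"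
      by (intro lattice_edge_anchor_mem_edge_box[OF R \<epsilon> bdd])
    then show "(1::ennreal) \<le> indicator (edge_box \<epsilon> R (Cs i) k) (m + z)"
      by simp
  qed
  also have "\<dots> = cover_count \<epsilon> R Cs z"
    by (simp add: cover_count_def lattice_count_def)
  finally show ?thesis .
qed

lemma emeasure_edge_incidences_le_liminf:
  fixes M :: "(real^'n) set" and Cs :: "nat \<Rightarrow> nat \<Rightarrow> (real^'n) set"
  assumes R: "orthogonal_matrix R" and \<epsilon>: "\<epsilon> > 0"
    and cov: "\<And>k. M \<subseteq> (\<Union>i. Cs k i)" and bdd: "\<And>k i. bounded (Cs k i)"
    and diam: "\<And>k i. diameter (Cs k i) \<le> \<delta> k" and \<delta>: "\<delta> \<longlonglongrightarrow> 0"
  shows "emeasure (count_space UNIV) (edge_incidences \<epsilon> R z \<Omega> M) \<le> liminf (\<lambda>k. cover_count \<epsilon> R (Cs k) z)"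
proof (rule emeasure_count_space_le)
  fix F assume F: "finite F" "F \<subseteq> edge_incidences \<epsilon> R z \<Omega> M"
  then have "uniform_discrete (snd ` F)"
    using uniform_discrete_finite_iff by blast
  then obtain d where "d > 0" and sep: "\<And>x y. x \<in> snd ` F \<Longrightarrow> y \<in> snd ` F \<Longrightarrow> dist x y < d \<Longrightarrow> x = y"
    unfolding uniform_discrete_def by blast
  with \<delta> have "eventually (\<lambda>k. \<delta> k < d) sequentially"
    by (simp add: order_tendsto_iff)
  then have "eventually (\<lambda>k. of_nat (card F) \<le> cover_count \<epsilon> R (Cs k) z) sequentially"
    by eventually_elim (rule card_le_cover_count[OF R \<epsilon> F sep cov bdd le_less_trans[OF diam]])
  then show "of_nat (card F) \<le> liminf (\<lambda>k. cover_count \<epsilon> R (Cs k) z)"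
    by (rule Liminf_bounded)
qed

lemma hausdorff_outer_approx_cover:
  assumes H: "hausdorff_outer s A \<noteq> \<infinity>" and \<delta>: "\<delta> > 0" and \<eta>: "\<eta> > 0"
  obtains C where "A \<subseteq> (\<Union>i. C i)" "\<And>i. bounded (C i)" "\<And>i. diameter (C i) \<le> \<delta>"
    "(\<Sum>i. ennreal (hcost s (C i))) < hausdorff_outer s A + ennreal \<eta>"
proof -
  let ?S = "{C :: nat \<Rightarrow> 'a set. A \<subseteq> (\<Union>i. C i) \<and> (\<forall>i. bounded (C i) \<and> diameter (C i) \<le> \<delta>)}"
  have "(INF C\<in>?S. \<Sum>i. ennreal (hcost s (C i))) \<le> hausdorff_outer s A"
    unfolding hausdorff_outer_def using \<delta> by (intro SUP_upper2[of \<delta>]) auto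
  also have "\<dots> < hausdorff_outer s A + ennreal \<eta>"
  proof -
    have "hausdorff_outer s A + 0 < hausdorff_outer s A + ennreal \<eta>"
      using H \<eta> by (subst ennreal_add_left_cancel_less) simp
    then show ?thesis by simp
  qed
  finally show ?thesis
    using that by (auto simp: INF_less_iff)
qed

lemma hausdorff_outer_approx_covers:
  assumes H: "hausdorff_outer s A \<noteq> \<infinity>" and \<epsilon>: "\<epsilon> > 0"
  obtains Cs where "\<And>k. A \<subseteq> (\<Union>i. Cs k i)" "\<And>k i. bounded (Cs k i)"
    "\<And>k i. diameter (Cs k i) \<le> \<epsilon> / real (Suc k)"
    "\<And>k. (\<Sum>i. ennreal (hcost s (Cs k i))) < hausdorff_outer s A + ennreal (1 / real (Suc k))"
proof -
  have "\<exists>C. A \<subseteq> (\<Union>i. C i) \<and> (\<forall>i. bounded (C i) \<and> diameter (C i) \<le> \<epsilon> / real (Suc k)) \<and>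
          (\<Sum>i. ennreal (hcost s (C i))) < hausdorff_outer s A + ennreal (1 / real (Suc k))" for k
    using hausdorff_outer_approx_cover[OF H, of "\<epsilon> / real (Suc k)" "1 / real (Suc k)"] \<epsilon>
    by (metis divide_pos_pos of_nat_0_less_iff zero_less_Suc zero_less_one)
  then show ?thesis
    using that by metis
qed

lemma edge_count_integral_le_liminf_cover_count:
  fixes R :: "real^'n^'n" and M \<Omega> :: "(real^'n) set" and Cs :: "nat \<Rightarrow> nat \<Rightarrow> (real^'n) set"
  assumes R: "orthogonal_matrix R" and \<epsilon>: "\<epsilon> > 0"
    and cov: "\<And>k. M \<subseteq> (\<Union>i. Cs k i)" and bdd: "\<And>k i. bounded (Cs k i)"
    and diam: "\<And>k i. diameter (Cs k i) \<le> \<delta> k" and \<delta>: "\<delta> \<longlonglongrightarrow> 0"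
  shows "(\<integral>\<^sup>+z\<in>unit_cube. (\<integral>\<^sup>+I. ennreal (\<epsilon> ^ (CARD('n) - 1)) * emeasure (count_space UNIV) (I \<inter> M)
            \<partial>count_space (edges \<epsilon> R z \<Omega>)) \<partial>lborel)
         \<le> liminf (\<lambda>k. ennreal (\<epsilon> ^ (CARD('n) - 1)) * (\<integral>\<^sup>+z\<in>unit_cube. cover_count \<epsilon> R (Cs k) z \<partial>lborel))"
    (is "?L \<le> liminf (\<lambda>k. ?c * _)")
proof -
  note incidences = emeasure_edge_incidences_le_liminf[OF R \<epsilon> cov bdd diam \<delta>]
  have "?L = (\<integral>\<^sup>+z\<in>unit_cube. ?c * emeasure (count_space UNIV) (edge_incidences \<epsilon> R z \<Omega> M) \<partial>lborel)"
    by (simp add: nn_integral_cmult nn_integral_count_space_emeasure_Sigma countable_edges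
        edge_incidences_def)
  also have "\<dots> \<le> (\<integral>\<^sup>+z. liminf (\<lambda>k. ?c * indicator unit_cube z * cover_count \<epsilon> R (Cs k) z) \<partial>lborel)"
  proof (rule nn_integral_mono)
    fix z
    have "?c * indicator unit_cube z * emeasure (count_space UNIV) (edge_incidences \<epsilon> R z \<Omega> M) \<le>
          ?c * indicator unit_cube z * liminf (\<lambda>k. cover_count \<epsilon> R (Cs k) z)"
      by (rule mult_left_mono[OF incidences]) simp
    also have "\<dots> = liminf (\<lambda>k. ?c * indicator unit_cube z * cover_count \<epsilon> R (Cs k) z)"
      by (rule liminf_ennreal_cmult[symmetric]) (simp add: indicator_def)
    finally show "?c * emeasure (count_space UNIV) (edge_incidences \<epsilon> R z \<Omega> M) * indicator unit_cube z
        \<le> liminf (\<lambda>k. ?c * indicator unit_cube z * cover_count \<epsilon> R (Cs k) z)"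
      by (simp only: ac_simps)
  qed
  also have "\<dots> \<le> liminf (\<lambda>k. \<integral>\<^sup>+z. ?c * indicator unit_cube z * cover_count \<epsilon> R (Cs k) z \<partial>lborel)"
    by (rule nn_integral_liminf) measurable
  also have "\<dots> = liminf (\<lambda>k. ?c * (\<integral>\<^sup>+z\<in>unit_cube. cover_count \<epsilon> R (Cs k) z \<partial>lborel))"
    by (simp add: nn_integral_cmult[symmetric] mult_ac)
  finally show ?thesis .
qed

lemma edge_count_integral_le_hausdorff_outer:
  fixes R :: "real^'n^'n" and M \<Omega> :: "(real^'n) set"
  assumes R: "orthogonal_matrix R" and \<epsilon>: "\<epsilon> > 0"
  shows "(\<integral>\<^sup>+z\<in>unit_cube. (\<integral>\<^sup>+I. ennreal (\<epsilon> ^ (CARD('n) - 1)) * emeasure (count_space UNIV) (I \<inter> M)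
            \<partial>count_space (edges \<epsilon> R z \<Omega>)) \<partial>lborel)
         \<le> ennreal (real CARD('n) * edge_box_const CARD('n)) * hausdorff_outer (real (CARD('n) - 1)) M"
    (is "?L \<le> ennreal ?K * ?H")
proof (cases "?H = \<infinity>")
  case True
  then show ?thesis
    using edge_box_const_pos[of "CARD('n)"] by (simp add: ennreal_mult_top)
next
  case False
  let ?c = "ennreal (\<epsilon> ^ (CARD('n) - 1))"
  obtain Cs where cov: "\<And>k. M \<subseteq> (\<Union>i. Cs k i)" and bdd: "\<And>k i. bounded (Cs k i)"
    and diam: "\<And>k i. diameter (Cs k i) \<le> \<epsilon> / real (Suc k)"
    and cost: "\<And>k. (\<Sum>i. ennreal (hcost (real (CARD('n) - 1)) (Cs k i))) < ?H + ennreal (1 / real (Suc k))"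
    using hausdorff_outer_approx_covers[OF False \<epsilon>] by blast
  have diam_le: "diameter (Cs k i) \<le> \<epsilon>" for k i
  proof -
    have "\<epsilon> / real (Suc k) \<le> \<epsilon>"
      using \<epsilon> by (simp add: divide_le_eq)
    then show ?thesis
      using diam[of k i] by linarith
  qed
  have "(\<lambda>k. \<epsilon> / real (Suc k)) \<longlonglongrightarrow> 0"
    unfolding divide_inverse by (rule tendsto_mult_right_zero[OF LIMSEQ_inverse_real_of_nat])
  then have "?L \<le> liminf (\<lambda>k. ?c * (\<integral>\<^sup>+z\<in>unit_cube. cover_count \<epsilon> R (Cs k) z \<partial>lborel))"
    by (rule edge_count_integral_le_liminf_cover_count[OF R \<epsilon> cov bdd diam])
  also have "\<dots> \<le> ennreal ?K * ?H"
  proof (rule liminf_le_of_le_add_inverse)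
    fix k
    have "?c * (\<integral>\<^sup>+z\<in>unit_cube. cover_count \<epsilon> R (Cs k) z \<partial>lborel)
        \<le> ennreal ?K * (\<Sum>i. ennreal (hcost (real (CARD('n) - 1)) (Cs k i)))"
      by (rule nn_integral_cover_count_le[OF \<epsilon> bdd diam_le])
    also have "\<dots> \<le> ennreal ?K * (?H + ennreal (1 / real (Suc k)))"
      using cost[of k] by (intro mult_left_mono) auto
    also have "\<dots> = ennreal ?K * ?H + ennreal (?K / real (Suc k))"
      using edge_box_const_pos[of "CARD('n)"] by (simp add: distrib_left ennreal_mult[symmetric])
    finally show "?c * (\<integral>\<^sup>+z\<in>unit_cube. cover_count \<epsilon> R (Cs k) z \<partial>lborel)
      \<le> ennreal ?K * ?H + ennreal (?K / real (Suc k))" .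
  qed
  finally show ?thesis .
qed

lemma closed_On: "closed (On :: (real^'n^'n) set)"
proof -
  have "On = (\<Inter>i. \<Inter>j. {R::real^'n^'n. (\<Sum>k\<in>UNIV. R$k$i * R$k$j) = (mat 1 :: real^'n^'n)$i$j})"
    by (auto simp: On_def orthogonal_matrix vec_eq_iff matrix_matrix_mult_def transpose_def)
  also have "closed \<dots>"
    by (intro closed_INT ballI closed_Collect_eq continuous_intros)
  finally show ?thesis .
qed

lemma sets_hausdorff_measure: "sets (hausdorff_measure s :: 'a::metric_space measure) = sets borel"
proof -
  have "sets (hausdorff_measure s :: 'a measure) = sigma_sets UNIV (sets borel)"
    unfolding hausdorff_measure_def by (rule sets_measure_of) simp
  then show ?thesis
    using sets.sigma_sets_eq[of borel] by simp
qed

lemma On_in_sets_hausdorff_measure: "(On :: (real^'n^'n) set) \<in> sets (hausdorff_measure s)"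
  unfolding sets_hausdorff_measure using closed_On by (rule borel_closed)

theorem lemma4p5:
  "\<exists>c::real. c > 0 \<and>
     (\<forall>(\<Omega> :: (real^'n) set) (M :: (real^'n) set) (\<epsilon>::real).
        open \<Omega> \<longrightarrow> M \<subseteq> \<Omega> \<longrightarrow> rectifiable (CARD('n) - 1) M \<longrightarrow>
        hausdorff_outer (real (CARD('n) - 1)) M < \<infinity> \<longrightarrow> \<epsilon> > 0 \<longrightarrow>
        (\<integral>\<^sup>+ R \<in> On. (\<integral>\<^sup>+ z \<in> unit_cube.
            (\<integral>\<^sup>+ I. ennreal (\<epsilon> ^ (CARD('n) - 1)) * emeasure (count_space UNIV) (I \<inter> M)
               \<partial>count_space (edges \<epsilon> R z \<Omega>)) \<partial>lborel)
          \<partial>(hausdorff_measure (real CARD('n) * (real CARD('n) - 1) / 2) :: (real^'n^'n) measure))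
        / emeasure (hausdorff_measure (real CARD('n) * (real CARD('n) - 1) / 2)) (On :: (real^'n^'n) set)
        \<le> ennreal c * hausdorff_outer (real (CARD('n) - 1)) M)"
proof (intro exI[of _ "real CARD('n) * edge_box_const CARD('n)"] conjI allI impI)
  show "real CARD('n) * edge_box_const CARD('n) > 0"
    using edge_box_const_pos by simp
qed (rule set_nn_integral_divide_emeasure_le[OF On_in_sets_hausdorff_measure
      edge_count_integral_le_hausdorff_outer], simp_all add: On_def)

end
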